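(* Let $G=(V,E)$ have $|V|=2$ (i.e. $G$ is the path $\mathcal P_2$), let $N=3$, $\varepsilon\in[0,\frac12]$, $\gamma\in(0,1)$ and $s_0\in S_{nc}$. Then $\Gamma_3(G|s_0,\gamma,\varepsilon)$ admits a positional trigger strategies profile $\bar\sigma$ (which is then unique) if and only if $\varepsilon\in[0,\frac12)$ and $\gamma\in\left[\sqrt{\frac{\varepsilon}{1-\varepsilon}},\frac{1}{2-2\varepsilon}\right]$.
   Context: Setting. $G=(V,E)$ is a finite, simple, connected, undirected graph; $N\ge 3$ is an integer; $\gamma\in(0,1)$ and $\varepsilon\in[0,\frac1{N-1}]$ are parameters. There are $N$ tokens: cops $C_1,\dots,C_{N-1}$ (tokens $1,\dots,N-1$) and the robber $R$ (token $N$). A state is $s=(x^1,\dots,x^N,n)$ where $x^i\in V$ is the position of token $i$ and $n\in\{1,\dots,N\}$ is the token that moves next; $S^n$ denotes the set of states with token $n$ to move. A state is a capture state if $x^i=x^N$ for some $i\le N-1$; $S_{nc}$ is the set of noncapture states. In each turn exactly one token, the one to move, moves to a vertex of its closed neighbourhood (it may stay put); the order of moves is $C_1,C_2,\dots,C_{N-1},R,C_1,\dots$. Starting from an initial state $s_0\in S_{nc}$ at time $0$, the capture time is the first time $t$ at which a capture state occurs (infinite if never); after capture the game is over. Auxiliary games. For $m\in\{1,\dots,N\}$, $\Gamma_N^m(G|s_0,\gamma,\varepsilon)$ is the two-player zero-sum game in which player $P_m$ controls token $m$ and player $P_{-m}$ controls all other tokens, with the following payoff to $P_m$ ($P_{-m}$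 receives its negative): $0$ if no capture ever occurs; if capture occurs at time $t$: for $m=N$, $-\gamma^t$; for $m\le N-1$, $\frac{1-\varepsilon}{K}\gamma^t$ if exactly $K\in\{1,\dots,N-2\}$ cops, including $C_m$, are on the robber's vertex, $\frac{\varepsilon}{N-K-1}\gamma^t$ if exactly $K\in\{1,\dots,N-2\}$ cops, not including $C_m$, are on the robber's vertex, and $\frac{\gamma^t}{N-1}$ if all $N-1$ cops are on the robber's vertex. $\Gamma^N_N$ is the modified cops-and-robber (CR) game. A pure positional strategy for token $n$ maps each state in $S^n\cap S_{nc}$ to an allowed next vertex. Each $\Gamma^m_N$ has optimal pure positional strategies (optimal from every initial state). For $m,n\in\{1,\dots,N\}$, $\phi^n_m$ denotes the strategy of token $n$ in a chosen pair of optimal pure positional strategies of $\Gamma^m_N$ (so $\phi^m_m$ is $P_m$'s optimal strategy and $(\phi^n_m)_{n\ne m}$ is $P_{-m}$'s). $\widehat\Sigma^n$ is the set of pure positional strategies of token $n$ that are components of optimal strategy pairs of $\Gamma^N_N$ (CR-optimal strategies). Trigger strategies. Given a choice of $(\phi^n_m)_{n,m}$, the trigger strategies profile $\bar\sigma=(\bar\sigma^1,\dots,\bar\sigma^N)$ of the $N$-player SCAR game $\Gamma_N(G|s_0,\gamma,\varepsilon)$ (same board and moves; player $n$ controls token $n$) is: token $n$, at current state $s$, plays $\phi^n_n(s)$ as long as every other player $m$ has followed $\phi^m_m$, and plays $\phi^n_m(s)$ from the moment a player $m\neq n$ deviates from $\phi^m_m$. Different choices of the optimal strategies give different trigger strategies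 profiles. $\bar\sigma$ is called positional if for all $n,m\in\{1,\dots,N\}$ there is $\widehat\sigma^n\in\widehat\Sigma^n$ with $\phi^n_m(s)=\widehat\sigma^n(s)$ for every state $s\in S^n\cap S_{nc}$ reachable from $s_0$ by a finite sequence of legal moves passing only through noncapture states; otherwise $\bar\sigma$ is nonpositional. *)

theory Defs
  imports Complex_Main
begin

text \<open>A state is a pair (xs, n): xs ! (i - 1) is the position of token i
  (tokens 1..N; token N is the robber), and n is the token that moves next.\<close>

type_synonym 'v state = "'v list \<times> nat"

definition pos :: "'v state \<Rightarrow> nat \<Rightarrow> 'v" where
  "pos s i = fst s ! (i - 1)"

definition mover :: "'v state \<Rightarrow> nat" where
  "mover s = snd s"

definition simple_connected_graph :: "'v set \<Rightarrow> ('v \<Rightarrow> 'v \<Rightarrow> bool) \<Rightarrow> bool" where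
  "simple_connected_graph V E \<longleftrightarrow> finite V \<and> V \<noteq> {} \<and>
     (\<forall>x y. E x y \<longrightarrow> x \<in> V \<and> y \<in> V) \<and>
     (\<forall>x y. E x y \<longrightarrow> E y x) \<and> (\<forall>x. \<not> E x x) \<and>
     (\<forall>x\<in>V. \<forall>y\<in>V. (x, y) \<in> {(a, b). E a b}\<^sup>*)"

definition cnb :: "('v \<Rightarrow> 'v \<Rightarrow> bool) \<Rightarrow> 'v \<Rightarrow> 'v set" where
  "cnb E x = {u. u = x \<or> E x u}"

definition valid_state :: "'v set \<Rightarrow> nat \<Rightarrow> 'v state \<Rightarrow> bool" where
  "valid_state V N s \<longleftrightarrow> length (fst s) = N \<and> set (fst s) \<subseteq> V \<and> 1 \<le> snd s \<and> snd s \<le> N"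

definition capture :: "nat \<Rightarrow> 'v state \<Rightarrow> bool" where
  "capture N s \<longleftrightarrow> (\<exists>i\<in>{1..N-1}. pos s i = pos s N)"

definition move :: "nat \<Rightarrow> 'v state \<Rightarrow> 'v \<Rightarrow> 'v state" where
  "move N s v = ((fst s)[snd s - 1 := v], snd s mod N + 1)"

text \<open>General (pure, history dependent) strategies: histories are the lists of
  states visited so far (the current state is the last one).\<close>
type_synonym 'v hstrat = "'v state list \<Rightarrow> 'v"

definition legal_h :: "('v \<Rightarrow> 'v \<Rightarrow> bool) \<Rightarrow> nat \<Rightarrow> 'v hstrat \<Rightarrow> bool" where
  "legal_h E n \<tau> \<longleftrightarrow> (\<forall>h. h \<noteq> [] \<longrightarrow> mover (last h) = n \<longrightarrow> \<tau> h \<in> cnb E (pos (last h) n))"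

definition legal_p :: "('v \<Rightarrow> 'v \<Rightarrow> bool) \<Rightarrow> nat \<Rightarrow> ('v state \<Rightarrow> 'v) \<Rightarrow> bool" where
  "legal_p E n \<sigma> \<longleftrightarrow> (\<forall>s. mover s = n \<longrightarrow> \<sigma> s \<in> cnb E (pos s n))"

definition pos_to_h :: "(nat \<Rightarrow> 'v state \<Rightarrow> 'v) \<Rightarrow> nat \<Rightarrow> 'v hstrat" where
  "pos_to_h \<phi> = (\<lambda>n h. \<phi> n (last h))"

fun hist :: "nat \<Rightarrow> (nat \<Rightarrow> 'v hstrat) \<Rightarrow> 'v state \<Rightarrow> nat \<Rightarrow> 'v state list" where
  "hist N \<sigma> s0 0 = [s0]"
| "hist N \<sigma> s0 (Suc t) =
     (let h = hist N \<sigma> s0 t in h @ [move N (last h) (\<sigma> (mover (last h)) h)])"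

definition play :: "nat \<Rightarrow> (nat \<Rightarrow> 'v hstrat) \<Rightarrow> 'v state \<Rightarrow> nat \<Rightarrow> 'v state" where
  "play N \<sigma> s0 t = last (hist N \<sigma> s0 t)"

definition reward :: "nat \<Rightarrow> real \<Rightarrow> nat \<Rightarrow> 'v state \<Rightarrow> real" where
  "reward N \<epsilon> m s =
     (if m = N then -1
      else (let K = card {i\<in>{1..N-1}. pos s i = pos s N} in
            if K = N - 1 then 1 / real (N - 1)
            else if pos s m = pos s N then (1 - \<epsilon>) / real K
            else \<epsilon> / real (N - K - 1)))"

definition payoff :: "nat \<Rightarrow> real \<Rightarrow> real \<Rightarrow> nat \<Rightarrow> (nat \<Rightarrow> 'v hstrat) \<Rightarrow> 'v state \<Rightarrow> real" where
  "payoff N \<gamma> \<epsilon> m \<sigma> s0 =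
     (if \<exists>t. capture N (play N \<sigma> s0 t)
      then (let T = (LEAST t. capture N (play N \<sigma> s0 t)) in
            reward N \<epsilon> m (play N \<sigma> s0 T) * \<gamma> ^ T)
      else 0)"

text \<open>\<phi> :: token \<Rightarrow> positional strategy is a pair of optimal pure positional
  strategies of \<Gamma>^m_N (P_m controls token m, P_{-m} all others),
  optimal (saddle point against arbitrary deviations) from every initial
  noncapture state.\<close>
definition opt_pair ::
  "'v set \<Rightarrow> ('v \<Rightarrow> 'v \<Rightarrow> bool) \<Rightarrow> nat \<Rightarrow> real \<Rightarrow> real \<Rightarrow> nat \<Rightarrow> (nat \<Rightarrow> 'v state \<Rightarrow> 'v) \<Rightarrow> bool" where
  "opt_pair V E N \<gamma> \<epsilon> m \<phi> \<longleftrightarrow>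
     (\<forall>n\<in>{1..N}. legal_p E n (\<phi> n)) \<and>
     (\<forall>s0. valid_state V N s0 \<and> \<not> capture N s0 \<longrightarrow>
        (\<forall>\<tau>. legal_h E m \<tau> \<longrightarrow>
            payoff N \<gamma> \<epsilon> m ((pos_to_h \<phi>)(m := \<tau>)) s0 \<le> payoff N \<gamma> \<epsilon> m (pos_to_h \<phi>) s0) \<and>
        (\<forall>\<tau>. (\<forall>n\<in>{1..N}. n \<noteq> m \<longrightarrow> legal_h E n (\<tau> n)) \<longrightarrow>
            payoff N \<gamma> \<epsilon> m (pos_to_h \<phi>) s0 \<le> payoff N \<gamma> \<epsilon> m (\<tau>(m := pos_to_h \<phi> m)) s0))"

definition CR_opt ::
  "'v set \<Rightarrow> ('v \<Rightarrow> 'v \<Rightarrow> bool) \<Rightarrow> nat \<Rightarrow> real \<Rightarrow> real \<Rightarrow> nat \<Rightarrow> ('v state \<Rightarrow> 'v) \<Rightarrow> bool" where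
  "CR_opt V E N \<gamma> \<epsilon> n \<sigma> \<longleftrightarrow> (\<exists>\<phi>. opt_pair V E N \<gamma> \<epsilon> N \<phi> \<and> \<phi> n = \<sigma>)"

inductive reach :: "('v \<Rightarrow> 'v \<Rightarrow> bool) \<Rightarrow> nat \<Rightarrow> 'v state \<Rightarrow> 'v state \<Rightarrow> bool"
  for E N s0 where
  refl: "reach E N s0 s0"
| step: "reach E N s0 s \<Longrightarrow> \<not> capture N s \<Longrightarrow> v \<in> cnb E (pos s (mover s)) \<Longrightarrow>
         reach E N s0 (move N s v)"

text \<open>A choice of optimal strategies: \<phi> m n is \<phi>^n_m, the strategy of token n
  in the chosen optimal pair of \<Gamma>^m_N.\<close>
definition trigger_choice ::
  "'v set \<Rightarrow> ('v \<Rightarrow> 'v \<Rightarrow> bool) \<Rightarrow> nat \<Rightarrow> real \<Rightarrow> real \<Rightarrow> (nat \<Rightarrow> nat \<Rightarrow> 'v state \<Rightarrow> 'v) \<Rightarrow> bool" where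
  "trigger_choice V E N \<gamma> \<epsilon> \<phi> \<longleftrightarrow> (\<forall>m\<in>{1..N}. opt_pair V E N \<gamma> \<epsilon> m (\<phi> m))"

definition positional_trigger ::
  "'v set \<Rightarrow> ('v \<Rightarrow> 'v \<Rightarrow> bool) \<Rightarrow> nat \<Rightarrow> real \<Rightarrow> real \<Rightarrow> 'v state \<Rightarrow> (nat \<Rightarrow> nat \<Rightarrow> 'v state \<Rightarrow> 'v) \<Rightarrow> bool" where
  "positional_trigger V E N \<gamma> \<epsilon> s0 \<phi> \<longleftrightarrow> trigger_choice V E N \<gamma> \<epsilon> \<phi> \<and>
     (\<forall>n\<in>{1..N}. \<forall>m\<in>{1..N}. \<exists>\<sigma>. CR_opt V E N \<gamma> \<epsilon> n \<sigma> \<and>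
        (\<forall>s. reach E N s0 s \<and> mover s = n \<and> \<not> capture N s \<longrightarrow> \<phi> m n s = \<sigma> s))"

text \<open>The trigger strategy of token n (as a history-dependent strategy):
  play \<phi>^n_n as long as every other player k followed \<phi>^k_k; from the first
  deviation of a player k \<noteq> n on, play \<phi>^n_k.\<close>
definition trigger_strat :: "nat \<Rightarrow> (nat \<Rightarrow> nat \<Rightarrow> 'v state \<Rightarrow> 'v) \<Rightarrow> nat \<Rightarrow> 'v hstrat" where
  "trigger_strat N \<phi> n h =
     (let D = {t. Suc t < length h \<and> mover (h ! t) \<noteq> n \<and>
                  h ! Suc t \<noteq> move N (h ! t) (\<phi> (mover (h ! t)) (mover (h ! t)) (h ! t))}
      in if D \<noteq> {} then \<phi> (mover (h ! Min D)) n (last h) else \<phi> n n (last h))"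

definition is_hist :: "('v \<Rightarrow> 'v \<Rightarrow> bool) \<Rightarrow> nat \<Rightarrow> 'v state \<Rightarrow> 'v state list \<Rightarrow> bool" where
  "is_hist E N s0 h \<longleftrightarrow> h \<noteq> [] \<and> hd h = s0 \<and>
     (\<forall>i. Suc i < length h \<longrightarrow> \<not> capture N (h ! i) \<and>
        (\<exists>v\<in>cnb E (pos (h ! i) (mover (h ! i))). h ! Suc i = move N (h ! i) v))"

end

theory Submission
  imports Defs
begin

text \<open>On the path \<open>P\<^sub>2\<close> every noncapture state has both cops on one vertex and the robber on
  the other, so each move either passes the turn or ends the game, and a play is decided by who
  ends it first. In the cops-and-robber game the cops must step onto the robber at once and the
  robber must stand still, so every CR-optimal strategy does exactly this on reachable states.
  Hence a positional trigger profile can only consist of this chase, which makes it unique, and it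
  exists iff the chase is an optimal pair in every auxiliary game. In the robber's game it always
  is. In cop 1's game (cop 2's is symmetric) the team of cop 2 and the robber has two threats:
  cop 2 waits so that cop 1 captures alone two moves later, which must not beat cop 2 capturing
  at once (\<open>\<epsilon> \<le> (1 - \<epsilon>) \<gamma>\<^sup>2\<close>), and the robber steps onto both cops one move before cop 1
  would capture alone (\<open>(1 - \<epsilon>) \<gamma> \<le> 1/2\<close>). These two inequalities bound every other deviation
  and are the stated interval for \<open>\<gamma>\<close>.\<close>

section \<open>Plays and payoffs\<close>

lemma play_0 [simp]: "play N \<sigma> s0 0 = s0"
  by (simp add: play_def)

lemma last_hist: "last (hist N \<sigma> s0 t) = play N \<sigma> s0 t"
  by (simp add: play_def)

lemma play_Suc:
  "play N \<sigma> s0 (Suc t) = move N (play N \<sigma> s0 t) (\<sigma> (mover (play N \<sigma> s0 t)) (hist N \<sigma> s0 t))"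
  by (simp add: play_def Let_def)

lemma play_Suc_legal:
  assumes "legal_h E (mover (play N \<sigma> s0 t)) (\<sigma> (mover (play N \<sigma> s0 t)))"
  obtains v where "v \<in> cnb E (pos (play N \<sigma> s0 t) (mover (play N \<sigma> s0 t)))"
    and "play N \<sigma> s0 (Suc t) = move N (play N \<sigma> s0 t) v"
proof -
  have "hist N \<sigma> s0 t \<noteq> []"
    by (induction t) (auto simp: Let_def)
  then show thesis
    using that assms by (auto simp: play_Suc legal_h_def last_hist)
qed

lemma play_Suc_follow:
  assumes "play N \<sigma> s0 t = s" "\<sigma> (mover s) = pos_to_h f (mover s)"
  shows "play N \<sigma> s0 (Suc t) = move N s (f (mover s) s)"
  using assms by (simp add: play_Suc pos_to_h_def last_hist)

lemma pos_to_h_fun_upd: "(pos_to_h f)(n := pos_to_h g n) = pos_to_h (f(n := g n))"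
  by (auto simp: pos_to_h_def)

lemma payoff_eq_first_capture:
  assumes "\<forall>t<T. \<not> capture N (play N \<sigma> s0 t)" "capture N (play N \<sigma> s0 T)"
  shows "payoff N \<gamma> \<epsilon> m \<sigma> s0 = reward N \<epsilon> m (play N \<sigma> s0 T) * \<gamma> ^ T"
proof -
  have "(LEAST t. capture N (play N \<sigma> s0 t)) = T"
    by (rule Least_equality) (use assms in \<open>auto simp: not_less[symmetric]\<close>)
  then show ?thesis
    using assms unfolding payoff_def by auto
qed

lemma payoff_robber_ge:
  assumes "\<forall>t<T. \<not> capture N (play N \<sigma> s0 t)" "0 \<le> \<gamma>" "\<gamma> \<le> 1"
  shows "- (\<gamma> ^ T) \<le> payoff N \<gamma> \<epsilon> N \<sigma> s0"
proof (cases "\<exists>t. capture N (play N \<sigma> s0 t)")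
  case True
  define T' where "T' = (LEAST t. capture N (play N \<sigma> s0 t))"
  have "capture N (play N \<sigma> s0 T')"
    unfolding T'_def using True by (rule LeastI_ex)
  with assms(1) have "T \<le> T'"
    using not_less by blast
  with assms(2,3) have "\<gamma> ^ T' \<le> \<gamma> ^ T"
    by (simp add: power_decreasing)
  with True show ?thesis
    unfolding payoff_def T'_def[symmetric] by (simp add: reward_def)
qed (use assms in \<open>simp add: payoff_def\<close>)

lemma reach_mover:
  assumes "reach E N s0 s" "mover s0 \<in> {1..N}"
  shows "mover s \<in> {1..N}"
  using assms by induction (auto simp: move_def mover_def Suc_le_eq)

lemma is_hist_reach:
  assumes "is_hist E N s0 h" "i < length h"
  shows "reach E N s0 (h ! i)"
  using assms(2)
proof (induction i)
  case 0
  with assms(1) show ?case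
    by (auto simp: is_hist_def hd_conv_nth[symmetric] intro: reach.refl)
next
  case (Suc i)
  then obtain v where "\<not> capture N (h ! i)" "v \<in> cnb E (pos (h ! i) (mover (h ! i)))"
    "h ! Suc i = move N (h ! i) v"
    using assms(1) unfolding is_hist_def by blast
  with Suc show ?case
    by (simp add: reach.step)
qed

lemma trigger_strat_component:
  assumes h: "is_hist E N s0 h" and "mover s0 \<in> {1..N}" "n \<in> {1..N}"
  obtains m where "m \<in> {1..N}" "trigger_strat N \<phi> n h = \<phi> m n (last h)"
proof (cases "trigger_strat N \<phi> n h = \<phi> n n (last h)")
  case False
  define D where "D = {t. Suc t < length h \<and> mover (h ! t) \<noteq> n \<and>
    h ! Suc t \<noteq> move N (h ! t) (\<phi> (mover (h ! t)) (mover (h ! t)) (h ! t))}"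
  with False have "D \<noteq> {}" and strat: "trigger_strat N \<phi> n h = \<phi> (mover (h ! Min D)) n (last h)"
    unfolding trigger_strat_def Let_def by (auto split: if_splits)
  moreover have "finite D"
    unfolding D_def by (rule finite_subset[of _ "{..<length h}"]) auto
  ultimately have "Min D < length h"
    using Min_in unfolding D_def by fastforce
  then have "mover (h ! Min D) \<in> {1..N}"
    using reach_mover[OF is_hist_reach[OF h]] assms(2) by blast
  with strat that show thesis
    by blast
qed (use assms(3) that in blast)

lemma atLeastAtMost_1_3: "{1..3::nat} = {1, 2, 3}"
  by auto

lemma next_turn_range: "k mod 3 + 1 \<in> {1, 2, 3::nat}"
proof -
  have "k mod 3 = 0 \<or> k mod 3 = 1 \<or> k mod 3 = 2"
    by presburger
  then show ?thesis
    by auto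
qed

lemma all_less_3: "(\<forall>t<3. P t) \<longleftrightarrow> P 0 \<and> P 1 \<and> P (2::nat)"
  by (auto simp: numeral_3_eq_3 numeral_2_eq_2 less_Suc_eq)

lemma capture3: "capture 3 s \<longleftrightarrow> pos s 1 = pos s 3 \<or> pos s 2 = pos s 3"
  by (auto simp: capture_def numeral_2_eq_2 le_Suc_eq)

lemma reward3_cop:
  assumes "m \<in> {1, 2}" "capture 3 s"
  shows "reward 3 \<epsilon> m s =
    (if pos s 1 = pos s 3 \<and> pos s 2 = pos s 3 then 1/2
     else if pos s m = pos s 3 then 1 - \<epsilon> else \<epsilon>)"
proof -
  have K: "{i \<in> {1..3 - 1}. pos s i = pos s 3} =
      (if pos s 1 = pos s 3 then {1} else {}) \<union> (if pos s 2 = pos s 3 then {2} else {})"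
    by (auto simp: numeral_2_eq_2 le_Suc_eq)
  from assms show ?thesis
    unfolding reward_def Let_def K by (auto simp: capture3)
qed

lemma reward_robber [simp]: "reward N \<epsilon> N s = -1"
  by (simp add: reward_def)

definition approach :: "('v \<Rightarrow> 'v \<Rightarrow> bool) \<Rightarrow> nat \<Rightarrow> nat \<Rightarrow> 'v state \<Rightarrow> 'v" where
  "approach E i n s = (if pos s i \<in> cnb E (pos s n) then pos s i else pos s n)"

text \<open>The robber occupies its own vertex, so for the robber \<open>chase\<close> means standing still.\<close>

abbreviation chase :: "('v \<Rightarrow> 'v \<Rightarrow> bool) \<Rightarrow> nat \<Rightarrow> 'v state \<Rightarrow> 'v" where
  "chase E \<equiv> approach E 3"

lemma legal_approach: "legal_p E n (approach E i n)"
  by (simp add: legal_p_def approach_def cnb_def)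

lemma legal_h_pos_to_h: "legal_p E n (f n) \<Longrightarrow> legal_h E n (pos_to_h f n)"
  unfolding legal_p_def legal_h_def pos_to_h_def by blast

section \<open>Discount arithmetic\<close>

lemma discounted_share_le:
  fixes \<epsilon> \<gamma> :: real
  assumes "0 \<le> \<epsilon>" "\<epsilon> \<le> 1/2" "0 \<le> \<gamma>" "\<gamma> \<le> 1" "i \<le> j"
  shows "\<epsilon> * \<gamma> ^ j \<le> (1 - \<epsilon>) * \<gamma> ^ i"
  using assms by (intro mult_mono power_decreasing) auto

lemma window_bounds:
  fixes \<epsilon> \<gamma> :: real
  assumes "0 \<le> \<epsilon>" "\<epsilon> \<le> 1/2" "0 < \<gamma>" "\<gamma> < 1"
    and lower: "\<epsilon> \<le> (1 - \<epsilon>) * \<gamma>\<^sup>2" and upper: "(1 - \<epsilon>) * \<gamma> \<le> 1/2"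
  shows "\<epsilon> * \<gamma> \<le> \<gamma>\<^sup>2 / 2" "\<epsilon> * \<gamma> \<le> (1 - \<epsilon>) * \<gamma> ^ 3" "(1 - \<epsilon>) * \<gamma>\<^sup>2 \<le> \<gamma> / 2"
    "\<epsilon> * \<gamma> \<le> (1 - \<epsilon>) * \<gamma>\<^sup>2" "\<epsilon> * \<gamma>\<^sup>2 \<le> \<gamma> / 2" "\<epsilon> * \<gamma>\<^sup>2 \<le> (1 - \<epsilon>) * \<gamma> ^ 3"
proof -
  have "\<gamma>\<^sup>2 \<le> \<gamma>"
    using assms by (simp add: power2_eq_square)
  have "(1 - \<epsilon>) * \<gamma>\<^sup>2 \<le> (1 - \<epsilon>) * \<gamma>"
    using \<open>\<gamma>\<^sup>2 \<le> \<gamma>\<close> assms by (intro mult_left_mono) auto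
  with lower have lower_weak: "\<epsilon> \<le> (1 - \<epsilon>) * \<gamma>"
    by linarith
  have "2 * \<epsilon> \<le> \<gamma>"
  proof (rule ccontr)
    assume "\<not> 2 * \<epsilon> \<le> \<gamma>"
    then have "(1 - \<epsilon>) * \<gamma>\<^sup>2 < (1 - \<epsilon>) * (2 * \<epsilon>)\<^sup>2"
      using assms by (intro mult_strict_left_mono power_strict_mono) auto
    also have "\<dots> = \<epsilon> - \<epsilon> * (2 * \<epsilon> - 1)\<^sup>2"
      by (simp add: power2_eq_square algebra_simps)
    also have "\<dots> \<le> \<epsilon>"
      using assms by simp
    finally show False
      using lower by simp
  qed
  then show "\<epsilon> * \<gamma> \<le> \<gamma>\<^sup>2 / 2"
    using mult_right_mono[of "2 * \<epsilon>" \<gamma> \<gamma>] assms by (simp add: power2_eq_square)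
  show "\<epsilon> * \<gamma> \<le> (1 - \<epsilon>) * \<gamma> ^ 3"
    using mult_right_mono[OF lower, of \<gamma>] assms by (simp add: power2_eq_square power3_eq_cube algebra_simps)
  show "(1 - \<epsilon>) * \<gamma>\<^sup>2 \<le> \<gamma> / 2"
    using mult_right_mono[OF upper, of \<gamma>] assms by (simp add: power2_eq_square algebra_simps)
  show "\<epsilon> * \<gamma> \<le> (1 - \<epsilon>) * \<gamma>\<^sup>2"
    using mult_right_mono[OF lower_weak, of \<gamma>] assms by (simp add: power2_eq_square algebra_simps)
  show "\<epsilon> * \<gamma>\<^sup>2 \<le> \<gamma> / 2"
    using mult_mono[OF assms(2) \<open>\<gamma>\<^sup>2 \<le> \<gamma>\<close>] assms by simp
  show "\<epsilon> * \<gamma>\<^sup>2 \<le> (1 - \<epsilon>) * \<gamma> ^ 3"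
    using mult_right_mono[OF lower_weak, of "\<gamma>\<^sup>2"] assms
    by (simp add: power2_eq_square power3_eq_cube algebra_simps)
qed

lemma window_iff:
  fixes \<epsilon> \<gamma> :: real
  assumes "0 \<le> \<epsilon>" "\<epsilon> \<le> 1/2" "0 < \<gamma>" "\<gamma> < 1"
  shows "(\<epsilon> < 1/2 \<and> sqrt (\<epsilon> / (1 - \<epsilon>)) \<le> \<gamma> \<and> \<gamma> \<le> 1 / (2 - 2 * \<epsilon>)) \<longleftrightarrow>
         (\<epsilon> \<le> (1 - \<epsilon>) * \<gamma>\<^sup>2 \<and> (1 - \<epsilon>) * \<gamma> \<le> 1/2)"
proof -
  have pos: "0 < 1 - \<epsilon>"
    using assms by simp
  have "sqrt (\<epsilon> / (1 - \<epsilon>)) \<le> \<gamma> \<longleftrightarrow> sqrt (\<epsilon> / (1 - \<epsilon>)) \<le> sqrt (\<gamma>\<^sup>2)"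
    using assms by simp
  also have "\<dots> \<longleftrightarrow> \<epsilon> / (1 - \<epsilon>) \<le> \<gamma>\<^sup>2"
    by (rule real_sqrt_le_iff)
  also have "\<dots> \<longleftrightarrow> \<epsilon> \<le> (1 - \<epsilon>) * \<gamma>\<^sup>2"
    using pos by (simp add: divide_le_eq mult.commute)
  finally have lower: "sqrt (\<epsilon> / (1 - \<epsilon>)) \<le> \<gamma> \<longleftrightarrow> \<epsilon> \<le> (1 - \<epsilon>) * \<gamma>\<^sup>2" .
  have upper: "\<gamma> \<le> 1 / (2 - 2 * \<epsilon>) \<longleftrightarrow> (1 - \<epsilon>) * \<gamma> \<le> 1/2"
    using pos by (simp add: le_divide_eq algebra_simps)
  have "\<epsilon> < 1/2" if "\<epsilon> \<le> (1 - \<epsilon>) * \<gamma>\<^sup>2"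
  proof (rule ccontr)
    assume "\<not> \<epsilon> < 1/2"
    with assms have "\<epsilon> = 1/2"
      by simp
    with that have "1 \<le> \<gamma>\<^sup>2"
      by simp
    moreover have "\<gamma>\<^sup>2 < 1"
      using assms by (simp add: power_less_one_iff)
    ultimately show False
      by simp
  qed
  with lower upper show ?thesis
    by blast
qed

section \<open>The path with two vertices\<close>

locale path2_board =
  fixes V :: "'v set" and E :: "'v \<Rightarrow> 'v \<Rightarrow> bool" and u w :: 'v
  assumes vertices: "V = {u, w}" and distinct: "u \<noteq> w"
    and cnb_board: "x \<in> {u, w} \<Longrightarrow> cnb E x = {u, w}"

lemma path2_board_swap: "path2_board V E u w \<Longrightarrow> path2_board V E w u"
  unfolding path2_board_def by (metis insert_commute)

lemma path2_board_exists:
  assumes "simple_connected_graph V E" "card V = 2"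
  obtains u w where "path2_board V E u w"
proof -
  obtain u w where V: "V = {u, w}" and uw: "u \<noteq> w"
    using assms(2) by (auto simp: card_2_iff)
  have inV: "E x y \<Longrightarrow> x \<in> V \<and> y \<in> V" and irrefl: "\<not> E x x" and sym: "E x y \<Longrightarrow> E y x" for x y
    using assms(1) by (auto simp: simple_connected_graph_def)
  have "(u, w) \<in> {(x, y). E x y}\<^sup>*"
    using assms(1) V by (auto simp: simple_connected_graph_def)
  then have "E u w"
  proof (cases rule: converse_rtranclE)
    case (step y)
    then have "y = w"
      using inV[of u y] irrefl[of u] V by auto
    with step show ?thesis by simp
  qed (use uw in simp)
  then have "path2_board V E u w"
    using sym[of u w] inV irrefl V uw by unfold_locales (auto simp: cnb_def)
  with that show thesis .
qed

lemma path2_noncapture_waiting: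
  assumes "path2_board V E a b" "valid_state V 3 s" "\<not> capture 3 s"
  obtains u w k where "path2_board V E u w" "k \<in> {1, 2, 3}" "s = ([u, u, w], k)"
proof -
  interpret path2_board V E a b by fact
  obtain x y z k where s: "s = ([x, y, z], k)"
    using assms(2) by (cases s) (auto simp: valid_state_def numeral_3_eq_3 length_Suc_conv)
  have xyz: "x \<in> {a, b}" "y \<in> {a, b}" "z \<in> {a, b}" and k: "k \<in> {1, 2, 3}"
    using assms(2) vertices by (auto simp: s valid_state_def)
  have "x \<noteq> z" "y \<noteq> z"
    using assms(3) by (auto simp: s capture3 pos_def)
  with xyz distinct have "x = y" "path2_board V E x z"
    using path2_board_swap[OF assms(1)] assms(1) by auto
  with that k s show thesis
    by blast
qed

context path2_board
begin

text \<open>Noncapture states are \<open>([u, u, w], k)\<close>. The token to move either passes the turn or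
  steps onto the opposite vertex, which ends the game in \<open>capture_by k\<close>.\<close>

definition capture_by :: "nat \<Rightarrow> 'v state" where
  "capture_by k = move 3 ([u, u, w], k) (if k = 3 then u else w)"

lemma capture_capture_by: "k \<in> {1, 2, 3} \<Longrightarrow> capture 3 (capture_by k)"
  by (auto simp: capture_by_def move_def capture3 pos_def)

lemma not_capture_waiting: "\<not> capture 3 ([u, u, w], k)"
  using distinct by (simp add: capture3 pos_def)

lemma capture_by_neq_waiting:
  "k \<in> {1, 2, 3} \<Longrightarrow> capture_by k \<noteq> ([u, u, w], j)"
  "k \<in> {1, 2, 3} \<Longrightarrow> ([u, u, w], j) \<noteq> capture_by k"
  using capture_capture_by not_capture_waiting by metis+

lemma move_waiting:
  assumes "k \<in> {1, 2, 3}" "v \<in> cnb E (pos ([u, u, w], k) k)"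
  shows "move 3 ([u, u, w], k) v = ([u, u, w], k mod 3 + 1) \<or> move 3 ([u, u, w], k) v = capture_by k"
proof -
  have "pos ([u, u, w], k) k \<in> {u, w}"
    using assms(1) by (auto simp: pos_def)
  then have "v = u \<or> v = w"
    using assms(2) by (simp add: cnb_board)
  with assms(1) show ?thesis
    unfolding capture_by_def move_def by (elim insertE emptyE disjE) simp_all
qed

lemma play_Suc_waiting:
  assumes "play 3 \<sigma> s0 t = ([u, u, w], k)" "k \<in> {1, 2, 3}" "legal_h E k (\<sigma> k)"
  shows "play 3 \<sigma> s0 (Suc t) = ([u, u, w], k mod 3 + 1) \<or> play 3 \<sigma> s0 (Suc t) = capture_by k"
proof -
  have "mover (play 3 \<sigma> s0 t) = k"
    using assms(1) by (simp add: mover_def)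
  then obtain v where "v \<in> cnb E (pos ([u, u, w], k) k)" "play 3 \<sigma> s0 (Suc t) = move 3 ([u, u, w], k) v"
    using play_Suc_legal[of E 3 \<sigma> s0 t] assms(1,3) by auto
  with move_waiting[OF assms(2)] show ?thesis
    by simp
qed

lemma play_Suc_chase:
  assumes "play 3 \<sigma> s0 t = ([u, u, w], k)" "k \<in> {1, 2, 3}" "\<sigma> k = pos_to_h (chase E) k"
  shows "play 3 \<sigma> s0 (Suc t) = (if k = 3 then ([u, u, w], 1) else capture_by k)"
proof -
  have "pos ([u, u, w], k) k \<in> {u, w}"
    using assms(2) by (auto simp: pos_def)
  then have "chase E k ([u, u, w], k) = w"
    by (simp add: approach_def pos_def cnb_board)
  with play_Suc_follow[of 3 \<sigma> s0 t _ "chase E"] assms show ?thesis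
    unfolding capture_by_def by (auto simp: mover_def move_def)
qed

lemma play_Suc_positional:
  assumes "play 3 (pos_to_h f) s0 t = ([u, u, w], k)"
  shows "play 3 (pos_to_h f) s0 (Suc t) = move 3 ([u, u, w], k) (f k ([u, u, w], k))"
  using play_Suc_follow[OF assms] by (simp add: mover_def)

lemma payoff_capture_by:
  assumes "\<forall>t<T. \<not> capture 3 (play 3 \<sigma> s0 t)" "play 3 \<sigma> s0 T = capture_by j" "j \<in> {1, 2, 3}"
  shows "payoff 3 \<gamma> \<epsilon> m \<sigma> s0 = reward 3 \<epsilon> m (capture_by j) * \<gamma> ^ T"
  using payoff_eq_first_capture[OF assms(1)] assms(2,3) capture_capture_by by simp

lemma payoff_robber_ge_waiting:
  fixes \<gamma> :: real
  assumes "0 \<le> \<gamma>" "\<gamma> \<le> 1"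
  shows "- \<gamma> \<le> payoff 3 \<gamma> \<epsilon> 3 \<sigma> ([u, u, w], k)"
  using payoff_robber_ge[of 1 3 \<sigma> _ \<gamma> \<epsilon>] assms not_capture_waiting by simp

lemma payoff_robber_ge_waiting_twice:
  fixes \<gamma> :: real
  assumes "0 \<le> \<gamma>" "\<gamma> \<le> 1" "play 3 \<sigma> ([u, u, w], k) 1 = ([u, u, w], j)"
  shows "- (\<gamma>\<^sup>2) \<le> payoff 3 \<gamma> \<epsilon> 3 \<sigma> ([u, u, w], k)"
  using payoff_robber_ge[of 2 3 \<sigma> _ \<gamma> \<epsilon>] assms not_capture_waiting by (simp add: less_2_cases_iff)

lemma payoff_first_round:
  assumes legal: "\<forall>n \<in> {1, 2, 3}. legal_h E n (\<sigma> n)"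
    and k: "k \<in> {1, 2, 3}" "k1 = k mod 3 + 1" "k2 = k1 mod 3 + 1"
  shows "play 3 \<sigma> ([u, u, w], k) 1 = capture_by k \<and>
      payoff 3 \<gamma> \<epsilon> m \<sigma> ([u, u, w], k) = reward 3 \<epsilon> m (capture_by k) * \<gamma>
    \<or> play 3 \<sigma> ([u, u, w], k) 1 = ([u, u, w], k1) \<and> play 3 \<sigma> ([u, u, w], k) 2 = capture_by k1 \<and>
      payoff 3 \<gamma> \<epsilon> m \<sigma> ([u, u, w], k) = reward 3 \<epsilon> m (capture_by k1) * \<gamma>\<^sup>2
    \<or> play 3 \<sigma> ([u, u, w], k) 1 = ([u, u, w], k1) \<and> play 3 \<sigma> ([u, u, w], k) 2 = ([u, u, w], k2) \<and>
      play 3 \<sigma> ([u, u, w], k) 3 = capture_by k2 \<and>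
      payoff 3 \<gamma> \<epsilon> m \<sigma> ([u, u, w], k) = reward 3 \<epsilon> m (capture_by k2) * \<gamma> ^ 3
    \<or> play 3 \<sigma> ([u, u, w], k) 1 = ([u, u, w], k1) \<and> play 3 \<sigma> ([u, u, w], k) 2 = ([u, u, w], k2) \<and>
      play 3 \<sigma> ([u, u, w], k) 3 = ([u, u, w], k)"
    (is "?one \<or> ?two \<or> ?three \<or> ?none")
proof -
  let ?p = "play 3 \<sigma> ([u, u, w], k)"
  have k12: "k1 \<in> {1, 2, 3}" "k2 \<in> {1, 2, 3}" "k2 mod 3 + 1 = k"
    using k by auto
  have step: "?p t' = capture_by i \<or> ?p t' = ([u, u, w], i')"
    if "?p t = ([u, u, w], i)" "i \<in> {1, 2, 3}" "t' = Suc t" "i' = i mod 3 + 1" for t t' i i'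
    using play_Suc_waiting[OF that(1,2) legal[rule_format, OF that(2)]] that(3,4) by auto
  have "?p 1 = capture_by k \<or> ?p 1 = ([u, u, w], k1)"
    using step[OF _ k(1) _ k(2), of 0 1] by simp
  moreover have "?one" if one: "?p 1 = capture_by k"
    using one payoff_capture_by[OF _ one k(1)] not_capture_waiting by simp
  moreover have "?p 2 = capture_by k1 \<or> ?p 2 = ([u, u, w], k2)" if "?p 1 = ([u, u, w], k1)"
    using step[OF that k12(1) _ k(3), of 2] by simp
  moreover have "?two" if one: "?p 1 = ([u, u, w], k1)" and two: "?p 2 = capture_by k1"
    using one two payoff_capture_by[OF _ two k12(1)] not_capture_waiting by (simp add: less_2_cases_iff)
  moreover have "?p 3 = capture_by k2 \<or> ?p 3 = ([u, u, w], k)" if "?p 2 = ([u, u, w], k2)"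
    using step[OF that k12(2) _ k12(3)[symmetric], of 3] by simp
  moreover have "?three" if one: "?p 1 = ([u, u, w], k1)" and two: "?p 2 = ([u, u, w], k2)"
    and three: "?p 3 = capture_by k2"
    using one two three payoff_capture_by[OF _ three k12(2)] not_capture_waiting by (simp add: all_less_3)
  ultimately show ?thesis
    by blast
qed

lemma reward_capture_by:
  assumes "m \<in> {1, 2}" "k \<in> {1, 2, 3}"
  shows "reward 3 \<epsilon> m (capture_by k) = (if k = 3 then 1/2 else if k = m then 1 - \<epsilon> else \<epsilon>)"
proof -
  let ?s = "capture_by k"
  have "reward 3 \<epsilon> m ?s = (if pos ?s 1 = pos ?s 3 \<and> pos ?s 2 = pos ?s 3 then 1/2
      else if pos ?s m = pos ?s 3 then 1 - \<epsilon> else \<epsilon>)"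
    using assms by (simp add: reward3_cop capture_capture_by)
  also have "\<dots> = (if k = 3 then 1/2 else if k = m then 1 - \<epsilon> else \<epsilon>)"
    using assms distinct unfolding capture_by_def move_def pos_def
    by (elim insertE emptyE) (simp_all add: distinct[symmetric])
  finally show ?thesis .
qed

lemma payoff_chase:
  assumes "k \<in> {1, 2, 3}"
  shows "payoff 3 \<gamma> \<epsilon> m (pos_to_h (chase E)) ([u, u, w], k) =
    (if k = 3 then reward 3 \<epsilon> m (capture_by 1) * \<gamma>\<^sup>2 else reward 3 \<epsilon> m (capture_by k) * \<gamma>)"
proof -
  let ?p = "play 3 (pos_to_h (chase E)) ([u, u, w], k)"
  have p1: "?p 1 = (if k = 3 then ([u, u, w], 1) else capture_by k)"
    using play_Suc_chase[of _ _ 0 k] assms by simp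
  show ?thesis
  proof (cases "k = 3")
    case True
    have "?p 2 = capture_by 1"
      using play_Suc_chase[of _ _ 1 1, unfolded Suc_1] p1 True by simp
    with p1 True show ?thesis
      using payoff_capture_by[of 2 _ _ 1] not_capture_waiting by (simp add: less_2_cases_iff)
  next
    case False
    with p1 assms show ?thesis
      using payoff_capture_by[of 1 _ _ k] not_capture_waiting by simp
  qed
qed

text \<open>Tokens that chase cut \<open>payoff_first_round\<close> down to the branches in which the deviator
  ends the game or waits for the next chaser; what remains compares discounted shares.\<close>

lemma chase_deviation_unprofitable:
  fixes \<epsilon> \<gamma> :: real
  assumes \<tau>: "legal_h E m \<tau>" and m: "m \<in> {1, 2, 3}" and k: "k \<in> {1, 2, 3}"
    and \<epsilon>: "0 \<le> \<epsilon>" "\<epsilon> \<le> 1/2" and \<gamma>: "0 < \<gamma>" "\<gamma> < 1"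
  shows "payoff 3 \<gamma> \<epsilon> m ((pos_to_h (chase E))(m := \<tau>)) ([u, u, w], k)
    \<le> payoff 3 \<gamma> \<epsilon> m (pos_to_h (chase E)) ([u, u, w], k)"
proof -
  define \<sigma> where "\<sigma> = (pos_to_h (chase E))(m := \<tau>)"
  have legal: "\<forall>n \<in> {1, 2, 3}. legal_h E n (\<sigma> n)"
    using \<tau> by (auto simp: \<sigma>_def legal_approach legal_h_pos_to_h)
  have chasing: "\<sigma> j = pos_to_h (chase E) j" if "j \<noteq> m" for j
    using that by (simp add: \<sigma>_def)
  note round = payoff_first_round[of \<sigma> k _ _ \<gamma> \<epsilon> m, OF legal k]
  note chase = play_Suc_chase[of \<sigma> "([u, u, w], k)", OF _ _ chasing]
  have share: "\<epsilon> * \<gamma> ^ j \<le> (1 - \<epsilon>) * \<gamma> ^ i" if "i \<le> j" for i j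
    using discounted_share_le[OF \<epsilon>] \<gamma> that by simp
  have "\<gamma>\<^sup>2 \<le> \<gamma>"
    using \<gamma> by (simp add: power2_eq_square)
  note facts = share[of 1 2] share[of 2 3] share[of 1 3] this payoff_chase[OF k]
    reward_capture_by[of m 1] reward_capture_by[of m 2] reward_capture_by[of m 3]
  from k consider "k = 1" | "k = 2" | "k = 3" by blast
  then have "payoff 3 \<gamma> \<epsilon> m \<sigma> ([u, u, w], k) \<le> payoff 3 \<gamma> \<epsilon> m (pos_to_h (chase E)) ([u, u, w], k)"
  proof cases
    case 1
    with m show ?thesis
      using round[of 2 3] chase[of 0 1] chase[of 1 2, unfolded Suc_1] chase[of 2 3] facts
        capture_by_neq_waiting
      by (elim insertE emptyE; simp; (elim disjE conjE)?; simp)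
  next
    case 2
    with m show ?thesis
      using round[of 3 1] chase[of 0 2] chase[of 1 3, unfolded Suc_1] chase[of 2 1] facts
        capture_by_neq_waiting
      by (elim insertE emptyE; simp; (elim disjE conjE)?; simp)
  next
    case 3
    with m show ?thesis
      using round[of 1 2] chase[of 0 3] chase[of 1 1, unfolded Suc_1] chase[of 2 2] facts
        capture_by_neq_waiting
      by (elim insertE emptyE; simp; (elim disjE conjE)?; simp)
  qed
  then show ?thesis by (simp add: \<sigma>_def)
qed

lemma chase_robber_secures_value:
  fixes \<gamma> :: real
  assumes "\<sigma> 3 = pos_to_h (chase E) 3" "k \<in> {1, 2, 3}" "0 \<le> \<gamma>" "\<gamma> \<le> 1"
  shows "payoff 3 \<gamma> \<epsilon> 3 (pos_to_h (chase E)) ([u, u, w], k) \<le> payoff 3 \<gamma> \<epsilon> 3 \<sigma> ([u, u, w], k)"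
proof (cases "k = 3")
  case True
  with assms(1) have "play 3 \<sigma> ([u, u, w], k) 1 = ([u, u, w], 1)"
    using play_Suc_chase[of \<sigma> _ 0 3] by simp
  with True assms(3,4) show ?thesis
    using payoff_robber_ge_waiting_twice payoff_chase[of 3] by simp
next
  case False
  with assms(2-4) show ?thesis
    using payoff_robber_ge_waiting payoff_chase[of k] by simp
qed

lemma chase_coalition_deviation_unprofitable:
  fixes \<epsilon> \<gamma> :: real
  assumes \<tau>: "\<And>n. n \<in> {1, 2, 3} \<Longrightarrow> n \<noteq> m \<Longrightarrow> legal_h E n (\<tau> n)"
    and m: "m \<in> {1, 2}" and k: "k \<in> {1, 2, 3}"
    and \<epsilon>: "0 \<le> \<epsilon>" "\<epsilon> \<le> 1/2" and \<gamma>: "0 < \<gamma>" "\<gamma> < 1"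
    and lower: "\<epsilon> \<le> (1 - \<epsilon>) * \<gamma>\<^sup>2" and upper: "(1 - \<epsilon>) * \<gamma> \<le> 1/2"
  shows "payoff 3 \<gamma> \<epsilon> m (pos_to_h (chase E)) ([u, u, w], k)
    \<le> payoff 3 \<gamma> \<epsilon> m (\<tau>(m := pos_to_h (chase E) m)) ([u, u, w], k)"
proof -
  define \<sigma> where "\<sigma> = \<tau>(m := pos_to_h (chase E) m)"
  have legal: "\<forall>n \<in> {1, 2, 3}. legal_h E n (\<sigma> n)"
    using \<tau> by (auto simp: \<sigma>_def legal_approach legal_h_pos_to_h)
  have "m \<in> {1, 2, 3}" "\<sigma> m = pos_to_h (chase E) m"
    using m by (auto simp: \<sigma>_def)
  note chase = play_Suc_chase[of \<sigma> "([u, u, w], k)" _ m, OF _ this]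
  note round = payoff_first_round[of \<sigma> k _ _ \<gamma> \<epsilon> m, OF legal k]
  note facts = window_bounds[OF \<epsilon> \<gamma> lower upper] payoff_chase[OF k] reward_capture_by[OF m]
    capture_by_neq_waiting
  from k consider "k = 1" | "k = 2" | "k = 3" by blast
  then have "payoff 3 \<gamma> \<epsilon> m (pos_to_h (chase E)) ([u, u, w], k) \<le> payoff 3 \<gamma> \<epsilon> m \<sigma> ([u, u, w], k)"
  proof cases
    case 1
    with m show ?thesis
      using round[of 2 3] chase[of 0] chase[of 1, unfolded Suc_1] chase[of 2] facts
      by (elim insertE emptyE; simp; (elim disjE conjE)?; simp)
  next
    case 2
    with m show ?thesis
      using round[of 3 1] chase[of 0] chase[of 1, unfolded Suc_1] chase[of 2] facts
      by (elim insertE emptyE; simp; (elim disjE conjE)?; simp)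
  next
    case 3
    with m show ?thesis
      using round[of 1 2] chase[of 0] chase[of 1, unfolded Suc_1] chase[of 2] facts
      by (elim insertE emptyE; simp; (elim disjE conjE)?; simp)
  qed
  then show ?thesis
    by (simp add: \<sigma>_def)
qed

lemma reach_waiting:
  assumes "reach E 3 ([u, u, w], k0) s" "k0 \<in> {1, 2, 3}"
  shows "capture 3 s \<or> (\<exists>k \<in> {1, 2, 3}. s = ([u, u, w], k))"
  using assms(1)
proof induction
  case refl
  with assms(2) show ?case by blast
next
  case (step s v)
  then obtain k where k: "k \<in> {1, 2, 3}" "s = ([u, u, w], k)"
    by blast
  with step.hyps(3) have "move 3 s v = ([u, u, w], k mod 3 + 1) \<or> move 3 s v = capture_by k"
    using move_waiting by (simp add: mover_def)
  then show ?case
    using capture_capture_by[OF k(1)] next_turn_range[of k] by fastforce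
qed

lemma reach_all_waiting:
  assumes "k0 \<in> {1, 2, 3}" "k \<in> {1, 2, 3}"
  shows "reach E 3 ([u, u, w], k0) ([u, u, w], k)"
proof -
  have next_turn: "reach E 3 ([u, u, w], k0) ([u, u, w], j mod 3 + 1)"
    if "reach E 3 ([u, u, w], k0) ([u, u, w], j)" "j \<in> {1, 2, 3}" for j
  proof -
    have "pos ([u, u, w], j) j \<in> cnb E (pos ([u, u, w], j) j)"
      by (simp add: cnb_def)
    from reach.step[OF that(1) not_capture_waiting, simplified mover_def snd_conv, OF this] that(2)
    show ?thesis
      by (auto simp: move_def pos_def)
  qed
  have r1: "reach E 3 ([u, u, w], k0) ([u, u, w], k0 mod 3 + 1)"
    using next_turn[OF reach.refl assms(1)] .
  have r2: "reach E 3 ([u, u, w], k0) ([u, u, w], (k0 mod 3 + 1) mod 3 + 1)"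
    using next_turn[OF r1 next_turn_range] .
  have "k \<in> {k0, k0 mod 3 + 1, (k0 mod 3 + 1) mod 3 + 1}"
    using assms by auto
  then show ?thesis
    using reach.refl r1 r2 by blast
qed

text \<open>A robber stepping onto the cops would do better standing still; a cop that waits delays
  the capture, which the cops' chase would have made at once.\<close>

lemma CR_opt_strikes:
  fixes \<epsilon> \<gamma> :: real
  assumes CR: "CR_opt V E 3 \<gamma> \<epsilon> n \<sigma>" and n: "n \<in> {1, 2, 3}" and \<gamma>: "0 < \<gamma>" "\<gamma> < 1"
  shows "\<sigma> ([u, u, w], n) = w"
proof (rule ccontr)
  assume wait: "\<sigma> ([u, u, w], n) \<noteq> w"
  obtain \<phi> where opt: "opt_pair V E 3 \<gamma> \<epsilon> 3 \<phi>" and \<phi>n: "\<phi> n = \<sigma>"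
    using CR unfolding CR_opt_def by blast
  have start: "valid_state V 3 ([u, u, w], n)" "\<not> capture 3 ([u, u, w], n)"
    using n vertices not_capture_waiting by (auto simp: valid_state_def)
  have "pos ([u, u, w], n) n \<in> {u, w}"
    using n by (auto simp: pos_def)
  moreover have "\<sigma> ([u, u, w], n) \<in> cnb E (pos ([u, u, w], n) n)"
    using opt n \<phi>n unfolding opt_pair_def legal_p_def by (auto simp: mover_def)
  ultimately have \<sigma>u: "\<sigma> ([u, u, w], n) = u"
    using wait by (simp add: cnb_board)
  have "\<gamma>\<^sup>2 < \<gamma>"
    using \<gamma> by (simp add: power2_eq_square)
  show False
  proof (cases "n = 3")
    case True
    have "play 3 (pos_to_h \<phi>) ([u, u, w], n) 1 = capture_by 3"
      using play_Suc_positional[of \<phi> "([u, u, w], n)" 0 n] \<phi>n \<sigma>u True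
      by (simp add: capture_by_def)
    then have "payoff 3 \<gamma> \<epsilon> 3 (pos_to_h \<phi>) ([u, u, w], n) = - \<gamma>"
      using payoff_capture_by[of 1 _ _ 3 \<gamma> \<epsilon> 3] not_capture_waiting by simp
    moreover
    define stay :: "'v hstrat" where "stay = (\<lambda>h. pos (last h) 3)"
    have "legal_h E 3 stay"
      by (simp add: legal_h_def stay_def cnb_def)
    then have "payoff 3 \<gamma> \<epsilon> 3 ((pos_to_h \<phi>)(3 := stay)) ([u, u, w], n)
        \<le> payoff 3 \<gamma> \<epsilon> 3 (pos_to_h \<phi>) ([u, u, w], n)"
      using opt start unfolding opt_pair_def by blast
    moreover have "play 3 ((pos_to_h \<phi>)(3 := stay)) ([u, u, w], n) 1 = ([u, u, w], 1)"
      using play_Suc[of 3 "(pos_to_h \<phi>)(3 := stay)" "([u, u, w], n)" 0] True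
      by (simp add: stay_def last_hist move_def mover_def pos_def)
    then have "- (\<gamma>\<^sup>2) \<le> payoff 3 \<gamma> \<epsilon> 3 ((pos_to_h \<phi>)(3 := stay)) ([u, u, w], n)"
      using payoff_robber_ge_waiting_twice \<gamma> by simp
    ultimately show False
      using \<open>\<gamma>\<^sup>2 < \<gamma>\<close> by simp
  next
    case False
    have "play 3 (pos_to_h \<phi>) ([u, u, w], n) 1 = ([u, u, w], n mod 3 + 1)"
      using play_Suc_positional[of \<phi> "([u, u, w], n)" 0 n] \<phi>n \<sigma>u False n
      by (auto simp: move_def)
    then have "- (\<gamma>\<^sup>2) \<le> payoff 3 \<gamma> \<epsilon> 3 (pos_to_h \<phi>) ([u, u, w], n)"
      using payoff_robber_ge_waiting_twice \<gamma> by simp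
    moreover have "legal_h E j (pos_to_h (chase E) j)" for j
      by (simp add: legal_approach legal_h_pos_to_h)
    then have "payoff 3 \<gamma> \<epsilon> 3 (pos_to_h \<phi>) ([u, u, w], n)
        \<le> payoff 3 \<gamma> \<epsilon> 3 ((pos_to_h (chase E))(3 := pos_to_h \<phi> 3)) ([u, u, w], n)"
      using opt start unfolding opt_pair_def by blast
    moreover have "play 3 ((pos_to_h (chase E))(3 := pos_to_h \<phi> 3)) ([u, u, w], n) 1 = capture_by n"
      using play_Suc_chase[of "(pos_to_h (chase E))(3 := pos_to_h \<phi> 3)" "([u, u, w], n)" 0 n] n False
      by simp
    ultimately show False
      using payoff_capture_by[of 1 _ _ n \<gamma> \<epsilon> 3] not_capture_waiting n \<open>\<gamma>\<^sup>2 < \<gamma>\<close> by fastforce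
  qed
qed

lemma positional_trigger_moves_onto_robber:
  fixes \<epsilon> \<gamma> :: real
  assumes PT: "positional_trigger V E 3 \<gamma> \<epsilon> ([u, u, w], k0) \<phi>" and k0: "k0 \<in> {1, 2, 3}"
    and \<gamma>: "0 < \<gamma>" "\<gamma> < 1" and mn: "m \<in> {1..3}" "n \<in> {1..3}"
    and s: "reach E 3 ([u, u, w], k0) s" "mover s = n" "\<not> capture 3 s"
  shows "\<phi> m n s = pos s 3"
proof -
  obtain \<sigma> where CR: "CR_opt V E 3 \<gamma> \<epsilon> n \<sigma>"
    and agree: "\<forall>s. reach E 3 ([u, u, w], k0) s \<and> mover s = n \<and> \<not> capture 3 s \<longrightarrow> \<phi> m n s = \<sigma> s"
    using PT mn unfolding positional_trigger_def by blast
  have "s = ([u, u, w], n)"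
    using reach_waiting[OF s(1) k0] s(2,3) by (auto simp: mover_def)
  moreover have "\<sigma> ([u, u, w], n) = w"
    using CR_opt_strikes[OF CR mn(2)[unfolded atLeastAtMost_1_3] \<gamma>] .
  ultimately show ?thesis
    using agree s by (simp add: pos_def)
qed

lemma positional_trigger_strat:
  fixes \<epsilon> \<gamma> :: real
  assumes PT: "positional_trigger V E 3 \<gamma> \<epsilon> ([u, u, w], k0) \<phi>" and k0: "k0 \<in> {1, 2, 3}"
    and \<gamma>: "0 < \<gamma>" "\<gamma> < 1" and n: "n \<in> {1..3}"
    and h: "is_hist E 3 ([u, u, w], k0) h" "mover (last h) = n" "\<not> capture 3 (last h)"
  shows "trigger_strat 3 \<phi> n h = pos (last h) 3"
proof -
  have "mover ([u, u, w], k0) \<in> {1..3}"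
    using k0 by (auto simp: mover_def)
  then obtain m where "m \<in> {1..3}" "trigger_strat 3 \<phi> n h = \<phi> m n (last h)"
    using trigger_strat_component[OF h(1) _ n, where \<phi>=\<phi>] by blast
  moreover have "reach E 3 ([u, u, w], k0) (last h)"
    using is_hist_reach[OF h(1), of "length h - 1"] h(1) by (simp add: is_hist_def last_conv_nth)
  ultimately show ?thesis
    using positional_trigger_moves_onto_robber[OF PT k0 \<gamma> _ n _ h(2,3)] by simp
qed

text \<open>Deviations of cop 1's opponents: \<open>\<lambda>n s. pos s n\<close> lets cop 2 and the robber stand still,
  \<open>approach E 1\<close> sends the robber onto the cops.\<close>

lemma payoff_against_strikers:
  fixes \<epsilon> \<gamma> :: real
  assumes strikes: "\<And>n. n \<in> {1, 2, 3} \<Longrightarrow> \<psi> n ([u, u, w], n) = w"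
  shows "payoff 3 \<gamma> \<epsilon> 1 (pos_to_h \<psi>) ([u, u, w], 2) = \<epsilon> * \<gamma>"
    and "payoff 3 \<gamma> \<epsilon> 1 (pos_to_h \<psi>) ([u, u, w], 3) = (1 - \<epsilon>) * \<gamma>\<^sup>2"
    and "payoff 3 \<gamma> \<epsilon> 1 (pos_to_h ((\<lambda>n s. pos s n)(1 := \<psi> 1))) ([u, u, w], 2) = (1 - \<epsilon>) * \<gamma> ^ 3"
    and "payoff 3 \<gamma> \<epsilon> 1 (pos_to_h ((approach E 1)(1 := \<psi> 1))) ([u, u, w], 3) = \<gamma> / 2"
proof -
  have w: "\<psi> 1 ([u, u, w], 1) = w" "\<psi> 2 ([u, u, w], 2) = w" "\<psi> 3 ([u, u, w], 3) = w"
    using strikes by simp_all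
  let ?p = "play 3 (pos_to_h \<psi>) ([u, u, w], 2)"
  have "?p 1 = capture_by 2"
    using play_Suc_positional[of \<psi> _ 0 2] w by (simp add: capture_by_def)
  then show "payoff 3 \<gamma> \<epsilon> 1 (pos_to_h \<psi>) ([u, u, w], 2) = \<epsilon> * \<gamma>"
    using payoff_capture_by[of 1 _ _ 2 \<gamma> \<epsilon> 1] reward_capture_by[of 1 2 \<epsilon>] not_capture_waiting by simp
  let ?p = "play 3 (pos_to_h \<psi>) ([u, u, w], 3)"
  have "?p 1 = ([u, u, w], 1)"
    using play_Suc_positional[of \<psi> _ 0 3] w by (simp add: move_def)
  moreover from this have "?p 2 = capture_by 1"
    using play_Suc_positional[of \<psi> _ 1 1, unfolded Suc_1] w by (simp add: capture_by_def)
  ultimately show "payoff 3 \<gamma> \<epsilon> 1 (pos_to_h \<psi>) ([u, u, w], 3) = (1 - \<epsilon>) * \<gamma>\<^sup>2"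
    using payoff_capture_by[of 2 _ _ 1 \<gamma> \<epsilon> 1] reward_capture_by[of 1 1 \<epsilon>] not_capture_waiting
    by (simp add: less_2_cases_iff)
  let ?f = "(\<lambda>n s. pos s n)(1 := \<psi> 1)"
  let ?p = "play 3 (pos_to_h ?f) ([u, u, w], 2)"
  have p1: "?p 1 = ([u, u, w], 3)"
    using play_Suc_positional[of ?f _ 0 2] by (simp add: move_def pos_def)
  moreover from p1 have p2: "?p 2 = ([u, u, w], 1)"
    using play_Suc_positional[of ?f _ 1 3, unfolded Suc_1] by (simp add: move_def pos_def)
  moreover from p2 have "?p 3 = capture_by 1"
    using play_Suc_positional[of ?f _ 2 1] w by (simp add: capture_by_def)
  ultimately show "payoff 3 \<gamma> \<epsilon> 1 (pos_to_h ?f) ([u, u, w], 2) = (1 - \<epsilon>) * \<gamma> ^ 3"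
    using payoff_capture_by[of 3 _ _ 1 \<gamma> \<epsilon> 1] reward_capture_by[of 1 1 \<epsilon>]
      not_capture_waiting by (simp add: all_less_3)
  let ?f = "(approach E 1)(1 := \<psi> 1)"
  let ?p = "play 3 (pos_to_h ?f) ([u, u, w], 3)"
  have "approach E 1 3 ([u, u, w], 3) = u"
    by (simp add: approach_def pos_def cnb_board)
  then have "?p 1 = capture_by 3"
    using play_Suc_positional[of ?f _ 0 3] by (simp add: capture_by_def)
  then show "payoff 3 \<gamma> \<epsilon> 1 (pos_to_h ?f) ([u, u, w], 3) = \<gamma> / 2"
    using payoff_capture_by[of 1 _ _ 3 \<gamma> \<epsilon> 1] reward_capture_by[of 1 3 \<epsilon>] not_capture_waiting by simp
qed

lemma positional_trigger_window:
  fixes \<epsilon> \<gamma> :: real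
  assumes PT: "positional_trigger V E 3 \<gamma> \<epsilon> ([u, u, w], k0) \<phi>" and k0: "k0 \<in> {1, 2, 3}"
    and \<gamma>: "0 < \<gamma>" "\<gamma> < 1"
  shows "\<epsilon> \<le> (1 - \<epsilon>) * \<gamma>\<^sup>2 \<and> (1 - \<epsilon>) * \<gamma> \<le> 1/2"
proof -
  define \<psi> where "\<psi> = \<phi> 1"
  have opt: "opt_pair V E 3 \<gamma> \<epsilon> 1 \<psi>"
    using PT by (simp add: positional_trigger_def trigger_choice_def \<psi>_def)
  have strikes: "\<psi> n ([u, u, w], n) = w" if "n \<in> {1, 2, 3}" for n
  proof -
    have "n \<in> {1..3}"
      using that by auto
    from positional_trigger_moves_onto_robber[OF PT k0 \<gamma> _ this reach_all_waiting[OF k0 that]]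
    show ?thesis
      using not_capture_waiting by (simp add: \<psi>_def mover_def pos_def)
  qed
  have coalition: "payoff 3 \<gamma> \<epsilon> 1 (pos_to_h \<psi>) ([u, u, w], k)
      \<le> payoff 3 \<gamma> \<epsilon> 1 (pos_to_h (f(1 := \<psi> 1))) ([u, u, w], k)"
    if "\<And>n. legal_p E n (f n)" "k \<in> {1, 2, 3}" for f k
  proof -
    have "valid_state V 3 ([u, u, w], k) \<and> \<not> capture 3 ([u, u, w], k)"
      using that(2) vertices not_capture_waiting by (auto simp: valid_state_def)
    with opt that(1) show ?thesis
      unfolding opt_pair_def pos_to_h_fun_upd[symmetric] by (blast intro: legal_h_pos_to_h)
  qed
  note payoffs = payoff_against_strikers[where \<psi>=\<psi> and \<gamma>=\<gamma> and \<epsilon>=\<epsilon>, OF strikes]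
  have "legal_p E n (\<lambda>s. pos s n)" for n
    by (simp add: legal_p_def cnb_def)
  with coalition[of "\<lambda>n s. pos s n" 2] payoffs(1,3)
  have "\<epsilon> * \<gamma> \<le> ((1 - \<epsilon>) * \<gamma>\<^sup>2) * \<gamma>"
    by (simp add: power2_eq_square power3_eq_cube mult.assoc)
  moreover have "((1 - \<epsilon>) * \<gamma>) * \<gamma> \<le> 1/2 * \<gamma>"
    using coalition[of "approach E 1" 3, OF legal_approach] payoffs(2,4)
    by (simp add: power2_eq_square mult.assoc)
  ultimately show ?thesis
    using \<gamma> by (auto dest: mult_right_le_imp_le)
qed

end

lemma opt_pair_chase:
  fixes \<epsilon> \<gamma> :: real
  assumes "path2_board V E a b" and m: "m \<in> {1..3}"
    and \<epsilon>: "0 \<le> \<epsilon>" "\<epsilon> \<le> 1/2" and \<gamma>: "0 < \<gamma>" "\<gamma> < 1"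
    and window: "m \<noteq> 3 \<Longrightarrow> \<epsilon> \<le> (1 - \<epsilon>) * \<gamma>\<^sup>2 \<and> (1 - \<epsilon>) * \<gamma> \<le> 1/2"
  shows "opt_pair V E 3 \<gamma> \<epsilon> m (chase E)"
proof -
  have m': "m \<in> {1, 2, 3}"
    using m by auto
  have "legal_p E n (chase E n)" for n
    by (rule legal_approach)
  moreover have "payoff 3 \<gamma> \<epsilon> m ((pos_to_h (chase E))(m := \<tau>)) s0 \<le> payoff 3 \<gamma> \<epsilon> m (pos_to_h (chase E)) s0"
    if s0: "valid_state V 3 s0 \<and> \<not> capture 3 s0" and \<tau>: "legal_h E m \<tau>" for s0 \<tau>
  proof -
    obtain u w k where "path2_board V E u w" "k \<in> {1, 2, 3}" "s0 = ([u, u, w], k)"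
      using path2_noncapture_waiting[OF assms(1)] s0 by blast
    then show ?thesis
      using path2_board.chase_deviation_unprofitable[OF _ \<tau> m' _ \<epsilon> \<gamma>] by simp
  qed
  moreover have "payoff 3 \<gamma> \<epsilon> m (pos_to_h (chase E)) s0 \<le> payoff 3 \<gamma> \<epsilon> m (\<tau>(m := pos_to_h (chase E) m)) s0"
    if s0: "valid_state V 3 s0 \<and> \<not> capture 3 s0"
      and \<tau>: "\<forall>n\<in>{1..3}. n \<noteq> m \<longrightarrow> legal_h E n (\<tau> n)" for s0 \<tau>
  proof -
    obtain u w k where board: "path2_board V E u w" and k: "k \<in> {1, 2, 3}" and s0: "s0 = ([u, u, w], k)"
      using path2_noncapture_waiting[OF assms(1)] s0 by blast
    show ?thesis
    proof (cases "m = 3")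
      case True
      then show ?thesis
        using path2_board.chase_robber_secures_value[OF board _ k, of "\<tau>(m := pos_to_h (chase E) m)"] \<gamma> s0
        by simp
    next
      case False
      with m' have cop: "m \<in> {1, 2}"
        by auto
      have "legal_h E n (\<tau> n)" if "n \<in> {1, 2, 3}" "n \<noteq> m" for n
        using that \<tau>[unfolded atLeastAtMost_1_3] by blast
      with False show ?thesis
        using path2_board.chase_coalition_deviation_unprofitable[OF board _ cop k \<epsilon> \<gamma>] window s0
        by simp
    qed
  qed
  ultimately show ?thesis
    unfolding opt_pair_def by blast
qed

lemma positional_trigger_chase:
  fixes \<epsilon> \<gamma> :: real
  assumes "path2_board V E a b" "0 \<le> \<epsilon>" "\<epsilon> \<le> 1/2" "0 < \<gamma>" "\<gamma> < 1"
    and "\<epsilon> \<le> (1 - \<epsilon>) * \<gamma>\<^sup>2 \<and> (1 - \<epsilon>) * \<gamma> \<le> 1/2"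
  shows "positional_trigger V E 3 \<gamma> \<epsilon> s0 (\<lambda>m. chase E)"
proof -
  have opt: "opt_pair V E 3 \<gamma> \<epsilon> m (chase E)" if "m \<in> {1..3}" for m
    using opt_pair_chase[OF assms(1) that assms(2-5)] assms(6) by blast
  then have "opt_pair V E 3 \<gamma> \<epsilon> 3 (chase E)"
    by simp
  with opt show ?thesis
    unfolding positional_trigger_def trigger_choice_def CR_opt_def by blast
qed

theorem mainTheorem1:
  fixes V :: "'v set" and E :: "'v \<Rightarrow> 'v \<Rightarrow> bool"
    and \<gamma> \<epsilon> :: real and s0 :: "'v state"
  assumes "simple_connected_graph V E" and "card V = 2"
    and "0 \<le> \<epsilon>" and "\<epsilon> \<le> 1/2"
    and "0 < \<gamma>" and "\<gamma> < 1"
    and "valid_state V 3 s0" and "\<not> capture 3 s0"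
  shows "((\<exists>\<phi>. positional_trigger V E 3 \<gamma> \<epsilon> s0 \<phi>) \<longleftrightarrow>
            (\<epsilon> < 1/2 \<and> sqrt (\<epsilon> / (1 - \<epsilon>)) \<le> \<gamma> \<and> \<gamma> \<le> 1 / (2 - 2 * \<epsilon>)))
         \<and> (\<forall>\<phi> \<phi>'. positional_trigger V E 3 \<gamma> \<epsilon> s0 \<phi> \<and> positional_trigger V E 3 \<gamma> \<epsilon> s0 \<phi>' \<longrightarrow>
              (\<forall>n\<in>{1..3}. \<forall>h. is_hist E 3 s0 h \<and> mover (last h) = n \<and> \<not> capture 3 (last h) \<longrightarrow>
                  trigger_strat 3 \<phi> n h = trigger_strat 3 \<phi>' n h))"
proof -
  obtain a b where "path2_board V E a b"
    using path2_board_exists[OF assms(1,2)] .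
  then obtain u w k0 where board: "path2_board V E u w" and k0: "k0 \<in> {1, 2, 3}"
    and s0: "s0 = ([u, u, w], k0)"
    using path2_noncapture_waiting assms(7,8) by metis
  interpret path2_board V E u w
    by (rule board)
  have window: "\<epsilon> \<le> (1 - \<epsilon>) * \<gamma>\<^sup>2 \<and> (1 - \<epsilon>) * \<gamma> \<le> 1/2"
    if "positional_trigger V E 3 \<gamma> \<epsilon> s0 \<phi>" for \<phi>
    using positional_trigger_window[OF that[unfolded s0] k0 assms(5,6)] .
  note positional_trigger_chase[OF board assms(3-6)]
  moreover have "trigger_strat 3 \<phi> n h = pos (last h) 3"
    if "positional_trigger V E 3 \<gamma> \<epsilon> s0 \<phi>" "n \<in> {1..3}"
      "is_hist E 3 s0 h" "mover (last h) = n" "\<not> capture 3 (last h)" for \<phi> n h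
    using positional_trigger_strat[OF _ k0 assms(5,6)] that unfolding s0 by blast
  ultimately show ?thesis
    using window window_iff[OF assms(3-6)] by metis
qed

end
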